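(* Let $I\subset(0,\infty)$ be the set of Mina margins of all positive ABMN solutions. Then: (1) there is $\lambda\in(0,1]$ with $I=[\lambda,\lambda^{-1}]$; (2) for $(m_{-\infty},m_\infty,n_{-\infty},n_\infty)\in\mathbb{R}^4$, a positive ABMN solution with this boundary data exists if and only if $m_{-\infty}<m_\infty$, $n_\infty<n_{-\infty}$ and $\frac{n_{-\infty}-n_\infty}{m_\infty-m_{-\infty}}\in[\lambda,\lambda^{-1}]$; (3) $\lambda\le 0.999904$.
   Context: The ABMN system on $\mathbb{Z}$ is the following set of equations in real variables $a_i,b_i,m_i,n_i$ ($i\in\mathbb{Z}$), with $a_i,b_i\ge 0$ always assumed: for every $i\in\mathbb{Z}$, $(a_i+b_i)(m_i+a_i)=a_im_{i+1}+b_im_{i-1}$; $(a_i+b_i)(n_i+b_i)=a_in_{i+1}+b_in_{i-1}$; $(a_i+b_i)^2=b_i(m_{i+1}-m_{i-1})$; $(a_i+b_i)^2=a_i(n_{i-1}-n_{i+1})$. A solution is positive if $a_i>0$ and $b_i>0$ for all $i$. Its boundary data is $(m_{-\infty},m_\infty,n_{-\infty},n_\infty)$, the limits $\lim_{k\to\infty}m_{-k}$, $\lim_{k\to\infty}m_k$, $\lim_{k\to\infty}n_{-k}$, $\lim_{k\to\infty}n_k$; for positive solutions these exist and are real, with $m_{-\infty}<m_\infty$, $n_\infty<n_{-\infty}$. Its Mina margin is $\frac{n_{-\infty}-n_\infty}{m_\infty-m_{-\infty}}$. *)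

theory Defs
  imports "HOL-Analysis.Analysis"
begin

definition ABMN_solution ::
  "(int \<Rightarrow> real) \<Rightarrow> (int \<Rightarrow> real) \<Rightarrow> (int \<Rightarrow> real) \<Rightarrow> (int \<Rightarrow> real) \<Rightarrow> bool" where
  "ABMN_solution a b m n \<longleftrightarrow>
     (\<forall>i::int.
        a i \<ge> 0 \<and> b i \<ge> 0 \<and>
        (a i + b i) * (m i + a i) = a i * m (i + 1) + b i * m (i - 1) \<and>
        (a i + b i) * (n i + b i) = a i * n (i + 1) + b i * n (i - 1) \<and>
        (a i + b i)^2 = b i * (m (i + 1) - m (i - 1)) \<and>
        (a i + b i)^2 = a i * (n (i - 1) - n (i + 1)))"

definition positive_ABMN_solution ::
  "(int \<Rightarrow> real) \<Rightarrow> (int \<Rightarrow> real) \<Rightarrow> (int \<Rightarrow> real) \<Rightarrow> (int \<Rightarrow> real) \<Rightarrow> bool" where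
  "positive_ABMN_solution a b m n \<longleftrightarrow>
     ABMN_solution a b m n \<and> (\<forall>i. a i > 0 \<and> b i > 0)"

definition has_boundary_data ::
  "(int \<Rightarrow> real) \<Rightarrow> (int \<Rightarrow> real) \<Rightarrow> real \<Rightarrow> real \<Rightarrow> real \<Rightarrow> real \<Rightarrow> bool" where
  "has_boundary_data m n mL mR nL nR \<longleftrightarrow>
     (\<lambda>k::nat. m (- int k)) \<longlonglongrightarrow> mL \<and>
     (\<lambda>k::nat. m (int k)) \<longlonglongrightarrow> mR \<and>
     (\<lambda>k::nat. n (- int k)) \<longlonglongrightarrow> nL \<and>
     (\<lambda>k::nat. n (int k)) \<longlonglongrightarrow> nR"

definition mina_margin :: "real \<Rightarrow> real \<Rightarrow> real \<Rightarrow> real \<Rightarrow> real" where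
  "mina_margin mL mR nL nR = (nL - nR) / (mR - mL)"

definition mina_margins :: "real set" where
  "mina_margins = {mina_margin mL mR nL nR | mL mR nL nR.
      \<exists>a b m n. positive_ABMN_solution a b m n \<and> has_boundary_data m n mL mR nL nR}"

end

theory Submission
  imports Defs
begin

(* Eliminating m and n, a positive solution is a bi-infinite sequence of pairs (a_i, b_i) with
   (a_(i+1), b_(i+1)) = abmn_next (a_i, b_i) for an explicit map that is homogeneous of degree one
   and is run backwards by swapping a and b; m and n are recovered as partial sums of 2 a_i + b_i
   and of b_i^2/a_i = a_(i+1) + 2 b_(i+1).  So the Mina margin is (A + 2B)/(2A + B), where A and B
   are the sums of the a_i and of the b_i.  The ratio a_i/b_i grows at least like
   rho -> rho + 2 rho^2 forwards, and b_i/a_i does so backwards; where a_i/b_i first reaches 1 it is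
   at most r_max = (3 + sqrt 33)/2, since one step from a pair with a <= b cannot overshoot further.
   Up to scaling and shifting, every orbit therefore passes through a pair (r, 1) with r in
   [1, r_max], and these orbits decay geometrically in both directions.  The set of margins is thus
   the continuous image of [1, r_max], a compact interval, and since swapping a and b inverts the
   margin it is [lambda, 1/lambda].  Affine changes of m and n realise all boundary data of a given
   margin, and interval arithmetic along the orbit of (2.906, 1) shows lambda <= 0.999904. *)

section \<open>The one-step map\<close>

definition pos_pair :: "real \<times> real \<Rightarrow> bool" where
  "pos_pair p \<longleftrightarrow> 0 < fst p \<and> 0 < snd p"

lemma pos_pair_swap [simp]: "pos_pair (prod.swap p) = pos_pair p"
  by (auto simp: pos_pair_def)

lemma pos_pair_scaleR: "0 < t \<Longrightarrow> pos_pair p \<Longrightarrow> pos_pair (t *\<^sub>R p)"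
  by (simp add: pos_pair_def)

definition abmn_rel :: "real \<times> real \<Rightarrow> real \<times> real \<Rightarrow> bool" where
  "abmn_rel p q \<longleftrightarrow>
     fst q ^ 2 = snd q * (2 * fst p + snd p) \<and> fst q + 2 * snd q = snd p ^ 2 / fst p"

(* Eliminating b' from abmn_rel (a, b) (a', b') leaves 2 a'^2 + (2a + b) a' = (2a + b) b^2/a;
   next_a a b is its positive root. *)
definition next_a :: "real \<Rightarrow> real \<Rightarrow> real" where
  "next_a a b = (sqrt ((2 * a + b)^2 + 8 * (2 * a + b) * (b^2 / a)) - (2 * a + b)) / 4"

definition abmn_next :: "real \<times> real \<Rightarrow> real \<times> real" where
  "abmn_next p = (next_a (fst p) (snd p), (snd p ^ 2 / fst p - next_a (fst p) (snd p)) / 2)"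

lemma next_a_equation:
  assumes "0 < a" "0 < b"
  shows "2 * next_a a b ^ 2 + (2 * a + b) * next_a a b = (2 * a + b) * (b^2 / a)"
proof -
  define c where "c = 2 * a + b"
  define R where "R = sqrt (c^2 + 8 * c * (b^2 / a))"
  have R2: "R^2 = c^2 + 8 * c * (b^2 / a)"
    using assms by (simp add: R_def c_def)
  have x: "next_a a b = (R - c) / 4"
    by (simp add: next_a_def R_def c_def)
  have "2 * next_a a b ^ 2 + c * next_a a b = (R^2 - c^2) / 8"
    unfolding x by (simp add: power2_eq_square field_simps)
  also have "\<dots> = c * (b^2 / a)"
    using R2 by simp
  finally show ?thesis
    by (simp add: c_def)
qed

lemma next_a_pos:
  assumes "0 < a" "0 < b"
  shows "0 < next_a a b"
proof -
  define c where "c = 2 * a + b"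
  have "c > 0" "0 < 8 * c * (b^2 / a)"
    using assms by (simp_all add: c_def)
  then have "sqrt (c^2) < sqrt (c^2 + 8 * c * (b^2 / a))"
    by (intro real_sqrt_less_mono) linarith
  then show ?thesis
    using \<open>c > 0\<close> by (simp add: next_a_def flip: c_def)
qed

lemma next_a_less:
  assumes "0 < a" "0 < b"
  shows "next_a a b < b^2 / a"
proof -
  have "0 < 2 * next_a a b ^ 2"
    using next_a_pos[OF assms] by simp
  also have "2 * next_a a b ^ 2 = (2 * a + b) * (b^2 / a - next_a a b)"
    using next_a_equation[OF assms] by (simp add: algebra_simps)
  finally show ?thesis
    using assms by (simp add: zero_less_mult_iff)
qed

lemma next_a_compare:
  assumes "0 < a" "0 < b" "0 \<le> x"
  shows "x \<le> next_a a b \<longleftrightarrow> 2 * x^2 + (2 * a + b) * x \<le> (2 * a + b) * (b^2 / a)"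
    "next_a a b \<le> x \<longleftrightarrow> (2 * a + b) * (b^2 / a) \<le> 2 * x^2 + (2 * a + b) * x"
proof -
  define h where "h t = 2 * t^2 + (2 * a + b) * t" for t :: real
  have mono: "u \<le> v \<longleftrightarrow> h u \<le> h v" if "0 \<le> u" "0 \<le> v" for u v
  proof
    assume "u \<le> v"
    then show "h u \<le> h v"
      using that assms by (simp add: h_def add_mono mult_left_mono power_mono)
  next
    assume "h u \<le> h v"
    show "u \<le> v"
    proof (rule ccontr)
      assume "\<not> u \<le> v"
      then have "h v < h u"
        using that assms
          by (simp add: h_def add_strict_mono mult_strict_left_mono power_strict_mono)
      then show False
        using \<open>h u \<le> h v\<close> by simp
    qed
  qed
  have root: "h (next_a a b) = (2 * a + b) * (b^2 / a)"
    using next_a_equation[OF assms(1,2)] by (simp add: h_def)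
  have "0 \<le> next_a a b"
    using next_a_pos[OF assms(1,2)] by simp
  then show "x \<le> next_a a b \<longleftrightarrow> 2 * x^2 + (2 * a + b) * x \<le> (2 * a + b) * (b^2 / a)"
    "next_a a b \<le> x \<longleftrightarrow> (2 * a + b) * (b^2 / a) \<le> 2 * x^2 + (2 * a + b) * x"
    using mono[of x "next_a a b"] mono[of "next_a a b" x] assms(3) unfolding root
      by (simp_all add: h_def)
qed

lemma pos_pair_abmn_next: "pos_pair p \<Longrightarrow> pos_pair (abmn_next p)"
  using next_a_pos next_a_less by (simp add: pos_pair_def abmn_next_def)

lemma abmn_rel_next:
  assumes "pos_pair p"
  shows "abmn_rel p (abmn_next p)"
proof -
  obtain a b where p: "p = (a, b)" "0 < a" "0 < b"
    using assms by (cases p) (auto simp: pos_pair_def)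
  define x where "x = next_a a b"
  define s where "s = b^2 / a"
  have "2 * x^2 + (2 * a + b) * x = (2 * a + b) * s"
    using next_a_equation[OF p(2,3)] by (simp add: x_def s_def)
  then have "x^2 = (s - x) / 2 * (2 * a + b)"
    by (simp add: algebra_simps)
  moreover have "x + 2 * ((s - x) / 2) = s"
    by (simp add: field_simps)
  ultimately show ?thesis
    by (simp add: abmn_rel_def abmn_next_def p flip: x_def s_def)
qed

lemma abmn_rel_imp_eq_next:
  assumes "pos_pair p" "pos_pair q" "abmn_rel p q"
  shows "q = abmn_next p"
proof -
  obtain a b where p: "p = (a, b)" and ab: "0 < a" "0 < b"
    using assms(1) by (cases p) (auto simp: pos_pair_def)
  define c where "c = 2 * a + b"
  define s where "s = b^2 / a"
  define x where "x = next_a a b"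
  have rel: "fst q ^ 2 = snd q * c" "fst q + 2 * snd q = s"
    using assms(3) by (simp_all add: abmn_rel_def p c_def s_def)
  have "2 * fst q ^ 2 + c * fst q = c * s"
    using rel by (simp add: algebra_simps flip: rel(2))
  moreover have "2 * x^2 + c * x = c * s"
    using next_a_equation[OF ab] by (simp add: x_def c_def s_def)
  ultimately have "(fst q - x) * (2 * (fst q + x) + c) = 0"
    by (simp add: algebra_simps power2_eq_square)
  moreover have "0 < 2 * (fst q + x) + c"
    using assms(2) next_a_pos[OF ab] ab by (simp add: pos_pair_def x_def c_def)
  ultimately have "fst q = x"
    by simp
  moreover from this have "snd q = (s - x) / 2"
    using rel(2) by (simp add: field_simps)
  ultimately show ?thesis
    by (simp add: prod_eq_iff abmn_next_def p flip: x_def s_def)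
qed

lemma abmn_rel_swap:
  assumes "pos_pair p" "pos_pair q"
  shows "abmn_rel (prod.swap q) (prod.swap p) \<longleftrightarrow> abmn_rel p q"
  using assms by (auto simp: abmn_rel_def pos_pair_def field_simps)

lemma abmn_rel_scaleR:
  assumes "0 < t" "pos_pair p" "abmn_rel p q"
  shows "abmn_rel (t *\<^sub>R p) (t *\<^sub>R q)"
proof -
  have "(t * fst q)^2 = t^2 * (snd q * (2 * fst p + snd p))"
    using assms(3) by (simp add: abmn_rel_def power_mult_distrib)
  also have "\<dots> = t * snd q * (2 * (t * fst p) + t * snd p)"
    by (simp add: power2_eq_square algebra_simps)
  finally have 1: "(t * fst q)^2 = t * snd q * (2 * (t * fst p) + t * snd p)" .
  have "t * fst q + 2 * (t * snd q) = t * (fst q + 2 * snd q)"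
    by (simp add: algebra_simps)
  also have "\<dots> = (t * snd p)^2 / (t * fst p)"
    using assms(1,3) by (simp add: abmn_rel_def power2_eq_square)
  finally show ?thesis
    using 1 by (simp add: abmn_rel_def)
qed

(* Backwards, the orbit is the swapped forward orbit of the swapped pair (see abmn_rel_swap). *)
definition abmn_orbit :: "real \<times> real \<Rightarrow> int \<Rightarrow> real \<times> real" where
  "abmn_orbit p i =
     (if 0 \<le> i then (abmn_next ^^ nat i) p
      else prod.swap ((abmn_next ^^ nat (- i)) (prod.swap p)))"

lemma abmn_orbit_of_nat [simp]: "abmn_orbit p (int k) = (abmn_next ^^ k) p"
  by (simp add: abmn_orbit_def)

lemma abmn_orbit_0 [simp]: "abmn_orbit p 0 = p"
  by (simp add: abmn_orbit_def)

lemma abmn_orbit_minus: "abmn_orbit p (- int k) = prod.swap ((abmn_next ^^ k) (prod.swap p))"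
  by (cases "k = 0") (simp_all add: abmn_orbit_def)

lemma abmn_orbit_minus_Suc:
  "abmn_orbit p (- int k - 1) = prod.swap ((abmn_next ^^ k) (abmn_next (prod.swap p)))"
proof -
  have "- int k - 1 = - int (Suc k)"
    by simp
  then show ?thesis
    by (simp only: abmn_orbit_minus funpow_Suc_right o_apply)
qed

lemma pos_pair_abmn_iterate: "pos_pair p \<Longrightarrow> pos_pair ((abmn_next ^^ k) p)"
  by (induction k) (simp_all add: pos_pair_abmn_next)

lemma pos_pair_abmn_orbit: "pos_pair p \<Longrightarrow> pos_pair (abmn_orbit p i)"
  by (simp add: abmn_orbit_def pos_pair_abmn_iterate)

lemma abmn_rel_abmn_orbit:
  assumes "pos_pair p"
  shows "abmn_rel (abmn_orbit p i) (abmn_orbit p (i + 1))"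
proof (cases "0 \<le> i")
  case True
  then have "nat (i + 1) = Suc (nat i)"
    by simp
  then show ?thesis
    using True assms by (simp add: abmn_orbit_def abmn_rel_next pos_pair_abmn_iterate)
next
  case False
  define k where "k = nat (- i - 1)"
  have i: "i = - int (Suc k)"
    using False by (simp add: k_def)
  define q where "q = (abmn_next ^^ k) (prod.swap p)"
  have q: "pos_pair q"
    using assms by (simp add: q_def pos_pair_abmn_iterate)
  have "abmn_orbit p i = prod.swap (abmn_next q)" "abmn_orbit p (i + 1) = prod.swap q"
    using abmn_orbit_minus[of p "Suc k"] abmn_orbit_minus[of p k] by (simp_all add: i q_def)
  then show ?thesis
    using abmn_rel_swap[OF q pos_pair_abmn_next[OF q]] abmn_rel_next[OF q] by simp
qed

lemma abmn_orbit_Suc: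
  assumes "pos_pair p"
  shows "abmn_orbit p (i + 1) = abmn_next (abmn_orbit p i)"
  using abmn_rel_imp_eq_next abmn_rel_abmn_orbit pos_pair_abmn_orbit assms by blast

lemma abmn_iterate_unique:
  assumes "\<And>i. pos_pair (x i)" "\<And>i. abmn_rel (x i) (x (i + 1))"
  shows "x (int k) = (abmn_next ^^ k) (x 0)"
proof (induction k)
  case (Suc k)
  have "x (int k + 1) = abmn_next (x (int k))"
    using abmn_rel_imp_eq_next assms by blast
  then show ?case
    using Suc by (simp add: add.commute)
qed simp

lemma abmn_orbit_unique:
  assumes "\<And>i. pos_pair (x i)" "\<And>i. abmn_rel (x i) (x (i + 1))"
  shows "x i = abmn_orbit (x 0) i"
proof (cases "0 \<le> i")
  case True
  then show ?thesis
    using abmn_iterate_unique[of x "nat i"] assms by (simp add: abmn_orbit_def)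
next
  case False
  define k where "k = nat (- i)"
  have i: "i = - int k"
    using False by (simp add: k_def)
  define y where "y i = prod.swap (x (- i))" for i
  have "abmn_rel (y i) (y (i + 1))" for i
    using assms(2)[of "- i - 1"] abmn_rel_swap assms(1) by (simp add: y_def)
  then have "prod.swap (x (- int k)) = (abmn_next ^^ k) (prod.swap (x 0))"
    using abmn_iterate_unique[of y] assms(1) by (simp add: y_def)
  then have "x (- int k) = prod.swap ((abmn_next ^^ k) (prod.swap (x 0)))"
    by (metis swap_swap)
  then show ?thesis
    by (simp add: i abmn_orbit_minus)
qed

lemma abmn_orbit_shift:
  assumes "pos_pair p"
  shows "abmn_orbit (abmn_orbit p k) i = abmn_orbit p (k + i)"
proof -
  have "(\<lambda>i. abmn_orbit p (k + i)) i = abmn_orbit ((\<lambda>i. abmn_orbit p (k + i)) 0) i"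
    by (rule abmn_orbit_unique)
      (use assms in \<open>simp_all add: pos_pair_abmn_orbit abmn_rel_abmn_orbit flip: add.assoc\<close>)
  then show ?thesis
    by simp
qed

lemma abmn_orbit_scaleR:
  assumes "0 < t" "pos_pair p"
  shows "abmn_orbit (t *\<^sub>R p) i = t *\<^sub>R abmn_orbit p i"
proof -
  have "(\<lambda>i. t *\<^sub>R abmn_orbit p i) i = abmn_orbit ((\<lambda>i. t *\<^sub>R abmn_orbit p i) 0) i"
    by (rule abmn_orbit_unique)
      (use assms in \<open>simp_all add: pos_pair_scaleR pos_pair_abmn_orbit abmn_rel_scaleR
        abmn_rel_abmn_orbit\<close>)
  then show ?thesis
    by simp
qed

lemma abmn_orbit_swap:
  assumes "pos_pair p"
  shows "abmn_orbit (prod.swap p) i = prod.swap (abmn_orbit p (- i))"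
proof -
  have "abmn_rel (abmn_orbit p (- i - 1)) (abmn_orbit p (- i))" for i
    using abmn_rel_abmn_orbit[OF assms, of "- i - 1"] by simp
  then have "abmn_rel (prod.swap (abmn_orbit p (- i))) (prod.swap (abmn_orbit p (- (i + 1))))" for i
    using abmn_rel_swap pos_pair_abmn_orbit[OF assms] by simp
  then have "(\<lambda>i. prod.swap (abmn_orbit p (- i))) i =
      abmn_orbit ((\<lambda>i. prod.swap (abmn_orbit p (- i))) 0) i"
    by (intro abmn_orbit_unique) (simp_all add: pos_pair_abmn_orbit assms)
  then show ?thesis
    by simp
qed

section \<open>Positive solutions and their boundary data\<close>

lemma abmn_m_equations_iff:
  fixes a b m m_next m_prev :: real
  assumes "0 < a" "0 < b"
  shows "(a + b) * (m + a) = a * m_next + b * m_prev \<and> (a + b)^2 = b * (m_next - m_prev)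
     \<longleftrightarrow> m_next - m = 2 * a + b \<and> m - m_prev = a^2 / b"
proof
  assume "(a + b) * (m + a) = a * m_next + b * m_prev \<and> (a + b)^2 = b * (m_next - m_prev)"
  then have h: "(a + b) * (m + a) = a * m_next + b * m_prev" "(a + b)^2 = b * (m_next - m_prev)"
    by simp_all
  then have "(a + b) * (m_next - m) = (a + b) * (2 * a + b)"
    by (simp add: power2_eq_square algebra_simps)
  then have next_eq: "m_next - m = 2 * a + b"
    using assms by simp
  then have "b * (m - m_prev) = a^2"
    using h(2) by (simp add: power2_eq_square algebra_simps)
  then show "m_next - m = 2 * a + b \<and> m - m_prev = a^2 / b"
    using next_eq assms by (simp add: field_simps)
next
  assume h: "m_next - m = 2 * a + b \<and> m - m_prev = a^2 / b"
  have "m_next = m + 2 * a + b" "m_prev = m - a^2 / b"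
    using h by simp_all
  then show "(a + b) * (m + a) = a * m_next + b * m_prev \<and> (a + b)^2 = b * (m_next - m_prev)"
    using assms(2) by (simp add: power2_eq_square field_simps)
qed

lemma positive_ABMN_solution_differences:
  "positive_ABMN_solution a b m n \<longleftrightarrow>
     (\<forall>i. 0 < a i \<and> 0 < b i \<and>
          m (i + 1) - m i = 2 * a i + b i \<and> m i - m (i - 1) = a i ^ 2 / b i \<and>
          n (i - 1) - n i = 2 * b i + a i \<and> n i - n (i + 1) = b i ^ 2 / a i)"
proof -
  have n_iff: "(a i + b i) * (n i + b i) = a i * n (i + 1) + b i * n (i - 1) \<and>
         (a i + b i)^2 = a i * (n (i - 1) - n (i + 1)) \<longleftrightarrow>
       n (i - 1) - n i = 2 * b i + a i \<and> n i - n (i + 1) = b i ^ 2 / a i"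
    if "0 < a i" "0 < b i" for i
    using abmn_m_equations_iff[of "b i" "a i" "n i" "n (i - 1)" "n (i + 1)"] that
    by (simp only: add.commute)
  have equations_iff: "(a i + b i) * (m i + a i) = a i * m (i + 1) + b i * m (i - 1) \<and>
         (a i + b i) * (n i + b i) = a i * n (i + 1) + b i * n (i - 1) \<and>
         (a i + b i)^2 = b i * (m (i + 1) - m (i - 1)) \<and>
         (a i + b i)^2 = a i * (n (i - 1) - n (i + 1)) \<longleftrightarrow>
       m (i + 1) - m i = 2 * a i + b i \<and> m i - m (i - 1) = a i ^ 2 / b i \<and>
       n (i - 1) - n i = 2 * b i + a i \<and> n i - n (i + 1) = b i ^ 2 / a i"
    if "0 < a i" "0 < b i" for i
    using abmn_m_equations_iff[of "a i" "b i" "m i" "m (i + 1)" "m (i - 1)"] n_iff[OF that] that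
    by blast
  show ?thesis
    unfolding positive_ABMN_solution_def ABMN_solution_def
    using equations_iff by (blast intro: less_imp_le)
qed

lemma positive_ABMN_solution_iff:
  "positive_ABMN_solution a b m n \<longleftrightarrow>
     (\<forall>i. pos_pair (a i, b i) \<and> abmn_rel (a i, b i) (a (i + 1), b (i + 1)) \<and>
          m (i + 1) - m i = 2 * a i + b i \<and> n i - n (i + 1) = b i ^ 2 / a i)"
proof
  assume "positive_ABMN_solution a b m n"
  then have differences: "0 < a i \<and> 0 < b i \<and>
      m (i + 1) - m i = 2 * a i + b i \<and> m i - m (i - 1) = a i ^ 2 / b i \<and>
      n (i - 1) - n i = 2 * b i + a i \<and> n i - n (i + 1) = b i ^ 2 / a i" for i
    unfolding positive_ABMN_solution_differences by blast
  show "\<forall>i. pos_pair (a i, b i) \<and> abmn_rel (a i, b i) (a (i + 1), b (i + 1)) \<and>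
          m (i + 1) - m i = 2 * a i + b i \<and> n i - n (i + 1) = b i ^ 2 / a i"
  proof
    fix i
    have "a (i + 1) ^ 2 / b (i + 1) = 2 * a i + b i"
      using differences[of i] differences[of "i + 1"] by simp
    then have "a (i + 1) ^ 2 = b (i + 1) * (2 * a i + b i)"
      using differences[of "i + 1"] by (simp add: field_simps)
    moreover have "a (i + 1) + 2 * b (i + 1) = b i ^ 2 / a i"
      using differences[of i] differences[of "i + 1"] by simp
    ultimately show "pos_pair (a i, b i) \<and> abmn_rel (a i, b i) (a (i + 1), b (i + 1)) \<and>
          m (i + 1) - m i = 2 * a i + b i \<and> n i - n (i + 1) = b i ^ 2 / a i"
      using differences[of i] by (simp add: abmn_rel_def pos_pair_def)
  qed
next
  assume pairs: "\<forall>i. pos_pair (a i, b i) \<and> abmn_rel (a i, b i) (a (i + 1), b (i + 1)) \<and>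
          m (i + 1) - m i = 2 * a i + b i \<and> n i - n (i + 1) = b i ^ 2 / a i"
  show "positive_ABMN_solution a b m n"
    unfolding positive_ABMN_solution_differences
  proof
    fix i
    have prev: "pos_pair (a (i - 1), b (i - 1))" "abmn_rel (a (i - 1), b (i - 1)) (a i, b i)"
      "m i - m (i - 1) = 2 * a (i - 1) + b (i - 1)" "n (i - 1) - n i = b (i - 1) ^ 2 / a (i - 1)"
      using pairs[rule_format, of "i - 1"] by simp_all
    have cur: "0 < a i" "0 < b i"
      using pairs[rule_format, of i] by (simp_all add: pos_pair_def)
    have "m i - m (i - 1) = a i ^ 2 / b i"
      using prev(2,3) cur by (simp add: abmn_rel_def field_simps)
    moreover have "n (i - 1) - n i = 2 * b i + a i"
      using prev(2,4) by (simp add: abmn_rel_def)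
    ultimately show "0 < a i \<and> 0 < b i \<and>
          m (i + 1) - m i = 2 * a i + b i \<and> m i - m (i - 1) = a i ^ 2 / b i \<and>
          n (i - 1) - n i = 2 * b i + a i \<and> n i - n (i + 1) = b i ^ 2 / a i"
      using pairs[rule_format, of i] cur by simp
  qed
qed

lemma positive_ABMN_solution_orbit:
  assumes "positive_ABMN_solution a b m n"
  shows "(a i, b i) = abmn_orbit (a 0, b 0) i"
proof -
  have "(\<lambda>i. (a i, b i)) i = abmn_orbit ((\<lambda>i. (a i, b i)) 0) i"
    by (rule abmn_orbit_unique) (use assms in \<open>simp_all add: positive_ABMN_solution_iff\<close>)
  then show ?thesis
    by simp
qed

lemma positive_ABMN_solution_affine:
  assumes "positive_ABMN_solution a b m n" "0 < t"
  shows "positive_ABMN_solution (\<lambda>i. t * a i) (\<lambda>i. t * b i) (\<lambda>i. t * m i + \<sigma>) (\<lambda>i. t * n i + \<tau>)"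
  unfolding positive_ABMN_solution_iff
proof
  fix i
  have sol: "pos_pair (a i, b i)" "abmn_rel (a i, b i) (a (i + 1), b (i + 1))"
    "m (i + 1) - m i = 2 * a i + b i" "n i - n (i + 1) = b i ^ 2 / a i"
    using assms(1) by (simp_all add: positive_ABMN_solution_iff)
  have "t * m (i + 1) + \<sigma> - (t * m i + \<sigma>) = t * (m (i + 1) - m i)"
    by (simp add: algebra_simps)
  moreover have "t * n i + \<tau> - (t * n (i + 1) + \<tau>) = t * (n i - n (i + 1))"
    by (simp add: algebra_simps)
  moreover have "(t * b i) ^ 2 / (t * a i) = t * (b i ^ 2 / a i)"
    using assms(2) by (simp add: power2_eq_square)
  ultimately show "pos_pair (t * a i, t * b i) \<and>
      abmn_rel (t * a i, t * b i) (t * a (i + 1), t * b (i + 1)) \<and>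
      t * m (i + 1) + \<sigma> - (t * m i + \<sigma>) = 2 * (t * a i) + t * b i \<and>
      t * n i + \<tau> - (t * n (i + 1) + \<tau>) = (t * b i) ^ 2 / (t * a i)"
    using pos_pair_scaleR[OF assms(2) sol(1)] abmn_rel_scaleR[OF assms(2) sol(1) sol(2)] sol(3,4)
    by (simp add: algebra_simps)
qed

lemma has_boundary_data_affine:
  assumes "has_boundary_data m n mL mR nL nR"
  shows "has_boundary_data (\<lambda>i. t * m i + \<sigma>) (\<lambda>i. t * n i + \<tau>)
    (t * mL + \<sigma>) (t * mR + \<sigma>) (t * nL + \<tau>) (t * nR + \<tau>)"
  using assms unfolding has_boundary_data_def by (auto intro!: tendsto_intros)

lemma has_sum_int_split:
  fixes f :: "int \<Rightarrow> real"
  assumes "\<And>i. 0 \<le> f i" "(\<lambda>k. f (int k)) sums S" "(\<lambda>k. f (- int k - 1)) sums T"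
  shows "(f has_sum (S + T)) UNIV"
proof -
  have "inj (int :: nat \<Rightarrow> int)" "inj (\<lambda>k::nat. - int k - 1)"
    by (simp_all add: inj_on_def)
  moreover have "range int = {i::int. 0 \<le> i}"
    by (auto simp: image_iff) (metis nonneg_int_cases)
  moreover have "range (\<lambda>k::nat. - int k - 1) = {i. i < 0}"
  proof (auto simp: image_iff)
    fix i :: int
    assume "i < 0"
    then show "\<exists>k. i = - int k - 1"
      by (intro exI[of _ "nat (- i - 1)"]) simp
  qed
  moreover have "((\<lambda>k. f (int k)) has_sum S) UNIV" "((\<lambda>k. f (- int k - 1)) has_sum T) UNIV"
    using assms by (simp_all add: sums_nonneg_imp_has_sum)
  ultimately have "(f has_sum S) {i. 0 \<le> i}" "(f has_sum T) {i. i < 0}"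
    using has_sum_reindex[of int UNIV f S] has_sum_reindex[of "\<lambda>k::nat. - int k - 1" UNIV f T]
    by (simp_all add: o_def)
  then have "(f has_sum (S + T)) ({i. 0 \<le> i} \<union> {i. i < 0})"
    by (intro has_sum_Un_disjoint) auto
  moreover have "{i::int. 0 \<le> i} \<union> {i. i < 0} = UNIV"
    by auto
  ultimately show ?thesis
    by simp
qed

lemma has_sum_increments:
  fixes m c :: "int \<Rightarrow> real"
  assumes "\<And>i. 0 \<le> c i" "\<And>i. m (i + 1) - m i = c i"
    and "(\<lambda>k. m (- int k)) \<longlonglongrightarrow> L" "(\<lambda>k. m (int k)) \<longlonglongrightarrow> R"
  shows "(c has_sum (R - L)) UNIV"
proof -
  have "m (int k) - m 0 = (\<Sum>j<k. c (int j))" for k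
  proof (induction k)
    case (Suc k)
    then show ?case
      using assms(2)[of "int k"] by (simp add: algebra_simps)
  qed simp
  then have forward: "(\<lambda>k. c (int k)) sums (R - m 0)"
    using tendsto_diff[OF assms(4) tendsto_const[of "m 0"]] by (simp add: sums_def)
  have "m 0 - m (- int k) = (\<Sum>j<k. c (- int j - 1))" for k
  proof (induction k)
    case (Suc k)
    have e: "- int (Suc k) = - int k - 1"
      by simp
    have "m (- int k) - m (- int k - 1) = c (- int k - 1)"
      using assms(2)[of "- int k - 1"] by simp
    then show ?case
      unfolding e sum.lessThan_Suc using Suc by linarith
  qed simp
  then have backward: "(\<lambda>k. c (- int k - 1)) sums (m 0 - L)"
    using tendsto_diff[OF tendsto_const[of "m 0"] assms(3)] by (simp add: sums_def)
  show ?thesis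
    using has_sum_int_split[OF assms(1) forward backward] by simp
qed

lemma increments_partial_sums:
  fixes c :: "int \<Rightarrow> real"
  assumes "summable (\<lambda>k. c (int k))" "summable (\<lambda>k. c (- int k - 1))"
  obtains m where "\<And>i. m (i + 1) - m i = c i"
    "(\<lambda>k. m (- int k)) \<longlonglongrightarrow> - (\<Sum>k. c (- int k - 1))" "(\<lambda>k. m (int k)) \<longlonglongrightarrow> (\<Sum>k. c (int k))"
proof -
  define m where
    "m i = (if 0 \<le> i then \<Sum>j<nat i. c (int j) else - (\<Sum>j<nat (- i). c (- int j - 1)))" for i
  have m_nat: "m (int k) = (\<Sum>j<k. c (int j))" for k
    by (simp add: m_def)
  have m_neg: "m (- int k) = - (\<Sum>j<k. c (- int j - 1))" for k
    by (cases "k = 0") (simp_all add: m_def)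
  have m_neg_Suc: "m (- int k - 1) = - (\<Sum>j<Suc k. c (- int j - 1))" for k
    by (simp add: m_def nat_add_distrib)
  have "m (i + 1) - m i = c i" for i
  proof (cases "0 \<le> i")
    case True
    then have "nat (i + 1) = Suc (nat i)"
      by simp
    then show ?thesis
      using True by (simp add: m_def)
  next
    case False
    define k where "k = nat (- i - 1)"
    have "i = - int k - 1"
      using False by (simp add: k_def)
    then show ?thesis
      using m_neg_Suc[of k] m_neg[of k] by simp
  qed
  moreover have "(\<lambda>k. m (- int k)) \<longlonglongrightarrow> - (\<Sum>k. c (- int k - 1))"
    unfolding m_neg by (intro tendsto_minus summable_LIMSEQ assms(2))
  moreover have "(\<lambda>k. m (int k)) \<longlonglongrightarrow> (\<Sum>k. c (int k))"
    unfolding m_nat by (intro summable_LIMSEQ assms(1))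
  ultimately show ?thesis
    using that by blast
qed

lemma positive_ABMN_solution_of_pairs:
  fixes a b :: "int \<Rightarrow> real"
  assumes "\<And>i. pos_pair (a i, b i)" "\<And>i. abmn_rel (a i, b i) (a (i + 1), b (i + 1))"
    and "summable (\<lambda>k. 2 * a (int k) + b (int k))"
        "summable (\<lambda>k. 2 * a (- int k - 1) + b (- int k - 1))"
    and "summable (\<lambda>k. a (int k + 1) + 2 * b (int k + 1))"
        "summable (\<lambda>k. a (- int k) + 2 * b (- int k))"
  obtains m n mL mR nL nR where "positive_ABMN_solution a b m n" "has_boundary_data m n mL mR nL nR"
proof -
  define c where "c i = 2 * a i + b i" for i
  define d where "d i = a (i + 1) + 2 * b (i + 1)" for i
  have c_summable: "summable (\<lambda>k. c (int k))" "summable (\<lambda>k. c (- int k - 1))"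
    using assms(3,4) by (simp_all add: c_def)
  have d_summable: "summable (\<lambda>k. - d (int k))" "summable (\<lambda>k. - d (- int k - 1))"
    unfolding summable_minus_iff using assms(5,6) by (simp_all add: d_def)
  obtain m where m: "\<And>i. m (i + 1) - m i = c i"
      "(\<lambda>k. m (- int k)) \<longlonglongrightarrow> - (\<Sum>k. c (- int k - 1))" "(\<lambda>k. m (int k)) \<longlonglongrightarrow> (\<Sum>k. c (int k))"
    using increments_partial_sums[OF c_summable] by blast
  obtain n where n: "\<And>i. n (i + 1) - n i = - d i"
      "(\<lambda>k. n (- int k)) \<longlonglongrightarrow> - (\<Sum>k. - d (- int k - 1))" "(\<lambda>k. n (int k)) \<longlonglongrightarrow> (\<Sum>k. - d (int k))"
    using increments_partial_sums[OF d_summable] by blast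
  have "d i = b i ^ 2 / a i" for i
    using assms(2)[of i] by (simp add: abmn_rel_def d_def)
  then have "positive_ABMN_solution a b m n"
    unfolding positive_ABMN_solution_iff using assms(1,2) m(1) n(1)
      by (simp add: c_def algebra_simps)
  moreover have "has_boundary_data m n (- (\<Sum>k. c (- int k - 1))) (\<Sum>k. c (int k))
      (- (\<Sum>k. - d (- int k - 1))) (\<Sum>k. - d (int k))"
    using m(2,3) n(2,3) by (simp add: has_boundary_data_def)
  ultimately show thesis
    using that by blast
qed

lemma summable_iterate_next_iff:
  fixes f :: "real \<times> real \<Rightarrow> real"
  shows "summable (\<lambda>k. f ((abmn_next ^^ k) (abmn_next q))) \<longleftrightarrow> summable (\<lambda>k. f ((abmn_next ^^ k) q))"
  using summable_Suc_iff[of "\<lambda>k. f ((abmn_next ^^ k) q)"]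
  by (simp add: funpow_Suc_right del: funpow.simps)

lemma abmn_orbit_solution:
  assumes "pos_pair p"
    and "summable (\<lambda>k. fst ((abmn_next ^^ k) p))" "summable (\<lambda>k. snd ((abmn_next ^^ k) p))"
    and "summable (\<lambda>k. fst ((abmn_next ^^ k) (abmn_next (prod.swap p))))"
    and "summable (\<lambda>k. snd ((abmn_next ^^ k) (abmn_next (prod.swap p))))"
  obtains m n mL mR nL nR where
    "positive_ABMN_solution (\<lambda>i. fst (abmn_orbit p i)) (\<lambda>i. snd (abmn_orbit p i)) m n"
    "has_boundary_data m n mL mR nL nR"
proof (rule positive_ABMN_solution_of_pairs)
  have "abmn_orbit p (int k + 1) = (abmn_next ^^ k) (abmn_next p)" for k
  proof -
    have "int k + 1 = int (Suc k)"
      by simp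
    then show ?thesis
      by (simp only: abmn_orbit_of_nat funpow_Suc_right o_apply)
  qed
  moreover have "summable (\<lambda>k. fst ((abmn_next ^^ k) (abmn_next p)))"
    "summable (\<lambda>k. snd ((abmn_next ^^ k) (abmn_next p)))"
    "summable (\<lambda>k. fst ((abmn_next ^^ k) (prod.swap p)))"
    "summable (\<lambda>k. snd ((abmn_next ^^ k) (prod.swap p)))"
    using assms(2-5) unfolding summable_iterate_next_iff .
  ultimately show "summable (\<lambda>k. 2 * fst (abmn_orbit p (int k)) + snd (abmn_orbit p (int k)))"
    "summable (\<lambda>k. 2 * fst (abmn_orbit p (- int k - 1)) + snd (abmn_orbit p (- int k - 1)))"
    "summable (\<lambda>k. fst (abmn_orbit p (int k + 1)) + 2 * snd (abmn_orbit p (int k + 1)))"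
    "summable (\<lambda>k. fst (abmn_orbit p (- int k)) + 2 * snd (abmn_orbit p (- int k)))"
    unfolding abmn_orbit_of_nat abmn_orbit_minus_Suc abmn_orbit_minus
    by (simp_all only: fst_swap snd_swap) (intro summable_add summable_mult assms; assumption)+
qed (use pos_pair_abmn_orbit[OF assms(1)] abmn_rel_abmn_orbit[OF assms(1)] in auto)

lemma has_sum_int_shift: "((\<lambda>i::int. f (k + i)) has_sum S) UNIV \<longleftrightarrow> (f has_sum S) UNIV"
  by (rule has_sum_reindex_bij_witness[of UNIV "\<lambda>i. i - k" "\<lambda>i. k + i"]) auto

lemma solution_has_sums:
  assumes "positive_ABMN_solution a b m n" "has_boundary_data m n mL mR nL nR"
  obtains A B where "(a has_sum A) UNIV" "(b has_sum B) UNIV"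
    "mR - mL = 2 * A + B" "nL - nR = A + 2 * B"
proof -
  have sol: "pos_pair (a i, b i)" "abmn_rel (a i, b i) (a (i + 1), b (i + 1))"
    "m (i + 1) - m i = 2 * a i + b i" "n i - n (i + 1) = b i ^ 2 / a i" for i
    using assms(1) by (simp_all add: positive_ABMN_solution_iff)
  have ab: "0 < a i" "0 < b i" for i
    using sol(1)[of i] by (simp_all add: pos_pair_def)
  have lim: "(\<lambda>k. m (- int k)) \<longlonglongrightarrow> mL" "(\<lambda>k. m (int k)) \<longlonglongrightarrow> mR"
    "(\<lambda>k. - n (- int k)) \<longlonglongrightarrow> - nL" "(\<lambda>k. - n (int k)) \<longlonglongrightarrow> - nR"
    using assms(2) by (simp_all add: has_boundary_data_def tendsto_minus)
  have c: "((\<lambda>i. 2 * a i + b i) has_sum (mR - mL)) UNIV"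
    by (rule has_sum_increments[OF _ sol(3) lim(1,2)]) (simp add: ab less_imp_le)
  have "((\<lambda>i. b i ^ 2 / a i) has_sum (- nR - - nL)) UNIV"
    by (rule has_sum_increments[OF _ _ lim(3,4)]) (use sol(4) ab in \<open>simp_all add: less_imp_le\<close>)
  then have d: "((\<lambda>i. b i ^ 2 / a i) has_sum (nL - nR)) UNIV"
    by simp
  have "a summable_on UNIV" "b summable_on UNIV"
    by (rule summable_on_comparison_test[OF has_sum_imp_summable[OF c]];
        simp add: ab less_imp_le add_increasing add_increasing2)+
  then obtain A B where A: "(a has_sum A) UNIV" and B: "(b has_sum B) UNIV"
    by (auto simp: summable_on_def)
  have "((\<lambda>i. 2 * a i + b i) has_sum (2 * A + B)) UNIV"
    by (intro has_sum_add has_sum_cmult_right A B)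
  then have "mR - mL = 2 * A + B"
    using c has_sum_unique by blast
  have "((\<lambda>i. a i + 2 * b i) has_sum (A + 2 * B)) UNIV"
    by (intro has_sum_add has_sum_cmult_right A B)
  then have "((\<lambda>i. a (1 + i) + 2 * b (1 + i)) has_sum (A + 2 * B)) UNIV"
    using has_sum_int_shift[of "\<lambda>i. a i + 2 * b i" 1] by simp
  moreover have "b i ^ 2 / a i = a (1 + i) + 2 * b (1 + i)" for i
    using sol(2)[of i] by (simp add: abmn_rel_def add.commute)
  ultimately have "nL - nR = A + 2 * B"
    using d has_sum_unique by auto
  show ?thesis
    by (rule that) fact+
qed

lemma solution_boundary_gaps:
  assumes "positive_ABMN_solution a b m n" "has_boundary_data m n mL mR nL nR"
  shows "mL < mR" "nR < nL"
proof -
  obtain A B where A: "(a has_sum A) UNIV" and B: "(b has_sum B) UNIV"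
    and gaps: "mR - mL = 2 * A + B" "nL - nR = A + 2 * B"
    using solution_has_sums[OF assms] .
  have ab: "0 < a i" "0 < b i" for i
    using assms(1) by (simp_all add: positive_ABMN_solution_differences)
  have zero: "((\<lambda>_. 0) has_sum (0::real)) UNIV"
    by (rule has_sum_0) simp
  have "0 < A" "0 < B"
    by (rule has_sum_strict_mono[OF zero A, of 0] has_sum_strict_mono[OF zero B, of 0];
        simp add: ab less_imp_le)+
  then show "mL < mR" "nR < nL"
    using gaps by auto
qed

lemma positive_solution_exists_of_margin:
  assumes "positive_ABMN_solution a b m n" "has_boundary_data m n mL' mR' nL' nR'"
    and "mL < mR" "mina_margin mL mR nL nR = mina_margin mL' mR' nL' nR'"
  shows "\<exists>a b m n. positive_ABMN_solution a b m n \<and> has_boundary_data m n mL mR nL nR"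
proof -
  have gaps: "mL' < mR'" "nR' < nL'"
    using solution_boundary_gaps[OF assms(1,2)] by simp_all
  define t where "t = (mR - mL) / (mR' - mL')"
  define \<sigma> where "\<sigma> = mL - t * mL'"
  define \<tau> where "\<tau> = nR - t * nR'"
  have t: "0 < t"
    using assms(3) gaps by (simp add: t_def)
  have "t * (mR' - mL') = mR - mL"
    using gaps by (simp add: t_def)
  moreover have "t * (nL' - nR') = nL - nR"
    using assms(3,4) gaps by (simp add: mina_margin_def t_def field_simps)
  ultimately have "t * mR' - t * mL' = mR - mL" "t * nL' - t * nR' = nL - nR"
    by (simp_all only: right_diff_distrib)
  then have "t * mL' + \<sigma> = mL" "t * mR' + \<sigma> = mR" "t * nL' + \<tau> = nL" "t * nR' + \<tau> = nR"
    unfolding \<sigma>_def \<tau>_def by linarith+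
  then have "has_boundary_data (\<lambda>i. t * m i + \<sigma>) (\<lambda>i. t * n i + \<tau>) mL mR nL nR"
    using has_boundary_data_affine[OF assms(2), of t \<sigma> \<tau>] by simp
  then show ?thesis
    using positive_ABMN_solution_affine[OF assms(1) t] by blast
qed

lemma infsum_int_shift: "(\<Sum>\<^sub>\<infinity>i::int. f (k + i)) = (\<Sum>\<^sub>\<infinity>i::int. f i)"
  by (rule infsum_reindex_bij_witness[of UNIV "\<lambda>i. i - k" "\<lambda>i. k + i"]) auto

lemma infsum_int_reflect: "(\<Sum>\<^sub>\<infinity>i::int. f (- i)) = (\<Sum>\<^sub>\<infinity>i::int. f i)"
  by (rule infsum_reindex_bij_witness[of UNIV uminus uminus]) auto

definition orbit_margin :: "real \<times> real \<Rightarrow> real" where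
  "orbit_margin p =
     (let A = \<Sum>\<^sub>\<infinity>i. fst (abmn_orbit p i); B = \<Sum>\<^sub>\<infinity>i. snd (abmn_orbit p i)
      in (A + 2 * B) / (2 * A + B))"

lemma mina_margin_solution:
  assumes "positive_ABMN_solution a b m n" "has_boundary_data m n mL mR nL nR"
  shows "mina_margin mL mR nL nR = orbit_margin (a 0, b 0)"
proof -
  obtain A B where A: "(a has_sum A) UNIV" and B: "(b has_sum B) UNIV"
    and gaps: "mR - mL = 2 * A + B" "nL - nR = A + 2 * B"
    using solution_has_sums[OF assms] .
  have "abmn_orbit (a 0, b 0) i = (a i, b i)" for i
    by (rule positive_ABMN_solution_orbit[OF assms(1), symmetric])
  then have "(\<Sum>\<^sub>\<infinity>i. fst (abmn_orbit (a 0, b 0) i)) = A" "(\<Sum>\<^sub>\<infinity>i. snd (abmn_orbit (a 0, b 0) i)) = B"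
    using A B by (simp_all add: infsumI)
  then show ?thesis
    using gaps by (simp add: mina_margin_def orbit_margin_def Let_def)
qed

lemma orbit_margin_shift:
  assumes "pos_pair p"
  shows "orbit_margin (abmn_orbit p k) = orbit_margin p"
  using infsum_int_shift[of "\<lambda>i. fst (abmn_orbit p i)" k]
    infsum_int_shift[of "\<lambda>i. snd (abmn_orbit p i)" k]
  by (simp add: orbit_margin_def abmn_orbit_shift[OF assms])

lemma orbit_margin_scaleR:
  assumes "0 < t" "pos_pair p"
  shows "orbit_margin (t *\<^sub>R p) = orbit_margin p"
proof -
  define A where "A = (\<Sum>\<^sub>\<infinity>i. fst (abmn_orbit p i))"
  define B where "B = (\<Sum>\<^sub>\<infinity>i. snd (abmn_orbit p i))"
  have "orbit_margin (t *\<^sub>R p) = (t * A + 2 * (t * B)) / (2 * (t * A) + t * B)"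
    by (simp add: orbit_margin_def Let_def abmn_orbit_scaleR[OF assms] infsum_cmult_right'
        A_def B_def)
  also have "\<dots> = (t * (A + 2 * B)) / (t * (2 * A + B))"
    by (simp add: algebra_simps)
  also have "\<dots> = orbit_margin p"
    using assms(1) by (simp add: orbit_margin_def Let_def A_def B_def)
  finally show ?thesis .
qed

lemma orbit_margin_swap:
  assumes "pos_pair p"
  shows "orbit_margin (prod.swap p) = 1 / orbit_margin p"
proof -
  define A where "A = (\<Sum>\<^sub>\<infinity>i. fst (abmn_orbit p i))"
  define B where "B = (\<Sum>\<^sub>\<infinity>i. snd (abmn_orbit p i))"
  have "(\<Sum>\<^sub>\<infinity>i. fst (abmn_orbit (prod.swap p) i)) = B"
    using infsum_int_reflect[of "\<lambda>i. snd (abmn_orbit p i)"]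
    by (simp add: abmn_orbit_swap[OF assms] B_def)
  moreover have "(\<Sum>\<^sub>\<infinity>i. snd (abmn_orbit (prod.swap p) i)) = A"
    using infsum_int_reflect[of "\<lambda>i. fst (abmn_orbit p i)"]
    by (simp add: abmn_orbit_swap[OF assms] A_def)
  ultimately have "orbit_margin (prod.swap p) = (2 * A + B) / (A + 2 * B)"
    by (simp add: orbit_margin_def Let_def add.commute)
  then show ?thesis
    by (simp add: orbit_margin_def Let_def A_def B_def)
qed

section \<open>Every orbit passes through a normalised pair\<close>

definition r_max :: real where
  "r_max = (3 + sqrt 33) / 2"

lemma r_max_bounds: "1 < r_max" "r_max < 5"
proof -
  have "5 < sqrt (33::real)"
    by (rule real_less_rsqrt) simp
  moreover have "sqrt (33::real) < 7"
    by (rule real_less_lsqrt) simp_all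
  ultimately show "1 < r_max" "r_max < 5"
    by (simp_all add: r_max_def)
qed

lemma le_r_max_iff:
  assumes "0 \<le> r"
  shows "r \<le> r_max \<longleftrightarrow> r^2 \<le> 3 * r + 6"
proof -
  define r' where "r' = (3 - sqrt 33) / 2"
  have "(sqrt 33)^2 = (33::real)"
    by simp
  then have factor: "r^2 - 3 * r - 6 = (r - r_max) * (r - r')"
    by (simp add: r_max_def r'_def power2_eq_square field_simps)
  have "5 < sqrt (33::real)"
    by (rule real_less_rsqrt) simp
  then have "0 < r - r'"
    using assms by (simp add: r'_def)
  then have "r^2 \<le> 3 * r + 6 \<longleftrightarrow> r - r_max \<le> 0"
    using factor by (smt (verit) mult_le_0_iff)
  then show ?thesis
    by simp
qed

lemma abmn_next_ratio_growth:
  assumes "pos_pair p"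
  shows "fst p / snd p + 2 * (fst p / snd p)^2 < fst (abmn_next p) / snd (abmn_next p)"
proof -
  obtain a b where p: "p = (a, b)" and ab: "0 < a" "0 < b"
    using assms by (cases p) (auto simp: pos_pair_def)
  define u where "u = fst (abmn_next p)"
  define v where "v = snd (abmn_next p)"
  have uv: "0 < u" "0 < v"
    using pos_pair_abmn_next[OF assms] by (simp_all add: pos_pair_def u_def v_def)
  have rel: "u^2 = v * (2 * a + b)" "u + 2 * v = b^2 / a"
    using abmn_rel_next[OF assms] by (simp_all add: abmn_rel_def p u_def v_def)
  have "u < b^2 / a"
    using rel(2) uv(2) by linarith
  then have "(2 * a + b) / (b^2 / a) < (2 * a + b) / u"
    using ab uv by (intro divide_strict_left_mono) auto
  moreover have "(2 * a + b) / (b^2 / a) = a / b + 2 * (a / b)^2"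
    using ab by (simp add: power2_eq_square field_simps)
  moreover have "(2 * a + b) / u = u / v"
    using rel(1) uv by (simp add: power2_eq_square field_simps)
  ultimately show ?thesis
    by (simp add: p u_def v_def)
qed

lemma abmn_iterate_eventually_fst_gt_snd:
  assumes "pos_pair p"
  obtains k where "snd ((abmn_next ^^ k) p) < fst ((abmn_next ^^ k) p)"
proof -
  define \<rho> where "\<rho> k = fst ((abmn_next ^^ k) p) / snd ((abmn_next ^^ k) p)" for k
  have pos: "0 < \<rho> k" for k
    using pos_pair_abmn_iterate[OF assms, of k] by (simp add: \<rho>_def pos_pair_def)
  have step: "\<rho> k + 2 * (\<rho> k)^2 < \<rho> (Suc k)" for k
    using abmn_next_ratio_growth[OF pos_pair_abmn_iterate[OF assms, of k]] by (simp add: \<rho>_def)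
  have mono: "\<rho> 0 \<le> \<rho> k" for k
  proof (induction k)
    case (Suc k)
    then show ?case
      using step[of k] by (smt (verit) zero_le_power2)
  qed simp
  have linear: "\<rho> 0 + real k * (2 * (\<rho> 0)^2) \<le> \<rho> k" for k
  proof (induction k)
    case (Suc k)
    have "(\<rho> 0)^2 \<le> (\<rho> k)^2"
      using mono[of k] pos[of 0] by (intro power_mono) auto
    then show ?case
      using Suc step[of k] by (simp add: algebra_simps)
  qed simp
  obtain k where "1 < real k * (2 * (\<rho> 0)^2)"
    using ex_less_of_nat_mult[of "2 * (\<rho> 0)^2" 1] pos[of 0] by auto
  then have "1 < \<rho> k"
    using linear[of k] pos[of 0] by linarith
  then show thesis
    using that[of k] pos_pair_abmn_iterate[OF assms, of k] by (simp add: \<rho>_def pos_pair_def)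
qed

lemma int_crossing:
  fixes P :: "int \<Rightarrow> bool"
  assumes "\<not> P j" "P l" "j \<le> l"
  obtains k where "\<not> P (k - 1)" "P k"
proof -
  have "\<exists>k. \<not> P (k - 1) \<and> P k" if "P (j + int n)" for n
    using that
  proof (induction n)
    case 0
    then show ?case
      using assms(1) by simp
  next
    case (Suc n)
    show ?case
    proof (cases "P (j + int n)")
      case True
      then show ?thesis
        using Suc.IH by blast
    next
      case False
      then show ?thesis
        using Suc.prems by (intro exI[of _ "j + int (Suc n)"]) simp
    qed
  qed
  moreover have "l = j + int (nat (l - j))"
    using assms(3) by simp
  ultimately show thesis
    using that assms(2) by metis
qed

lemma abmn_orbit_crossing:
  assumes "pos_pair p"
  obtains k where "fst (abmn_orbit p (k - 1)) < snd (abmn_orbit p (k - 1))"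
    "snd (abmn_orbit p k) \<le> fst (abmn_orbit p k)"
proof -
  obtain l where l: "snd (abmn_orbit p (int l)) < fst (abmn_orbit p (int l))"
    using abmn_iterate_eventually_fst_gt_snd[OF assms] by auto
  obtain j where "snd ((abmn_next ^^ j) (prod.swap p)) < fst ((abmn_next ^^ j) (prod.swap p))"
    using abmn_iterate_eventually_fst_gt_snd[of "prod.swap p"] assms by auto
  then have "\<not> snd (abmn_orbit p (- int j)) \<le> fst (abmn_orbit p (- int j))"
    by (simp add: abmn_orbit_minus)
  then obtain k where "\<not> snd (abmn_orbit p (k - 1)) \<le> fst (abmn_orbit p (k - 1))"
      "snd (abmn_orbit p k) \<le> fst (abmn_orbit p k)"
    using int_crossing[of "\<lambda>i. snd (abmn_orbit p i) \<le> fst (abmn_orbit p i)" "- int j" "int l"] l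
    by force
  then show thesis
    using that[of k] by simp
qed

lemma abmn_next_ratio_le_r_max:
  assumes "pos_pair p" "fst p \<le> snd p"
  shows "fst (abmn_next p) / snd (abmn_next p) \<le> r_max"
proof -
  obtain a b where p: "p = (a, b)" and ab: "0 < a" "0 < b"
    using assms(1) by (cases p) (auto simp: pos_pair_def)
  define u where "u = fst (abmn_next p)"
  define v where "v = snd (abmn_next p)"
  have uv: "0 < u" "0 < v"
    using pos_pair_abmn_next[OF assms(1)] by (simp_all add: pos_pair_def u_def v_def)
  define s where "s = b^2 / a"
  have rel: "u^2 = v * (2 * a + b)" "u + 2 * v = s"
    using abmn_rel_next[OF assms(1)] by (simp_all add: abmn_rel_def p u_def v_def s_def)
  have "a * a \<le> b * b" "a * b \<le> b * b"
    using assms(2) ab by (simp_all add: p mult_mono mult_right_mono)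
  then have "a * (2 * a + b) \<le> 3 * b^2"
    by (simp add: power2_eq_square algebra_simps)
  then have "2 * a + b \<le> 3 * s"
    using ab by (simp add: s_def field_simps)
  then have "u^2 \<le> v * (3 * s)"
    unfolding rel(1) using uv by (simp add: mult_left_mono)
  then have "u^2 \<le> v * (3 * (u + 2 * v))"
    by (simp only: rel(2))
  then have "(u / v)^2 \<le> 3 * (u / v) + 6"
    using uv by (simp add: power2_eq_square field_simps)
  then show ?thesis
    using le_r_max_iff[of "u / v"] uv by (simp add: u_def v_def)
qed

lemma orbit_margin_normal_form:
  assumes "pos_pair p"
  obtains r where "r \<in> {1..r_max}" "orbit_margin p = orbit_margin (r, 1)"
proof -
  obtain k where before: "fst (abmn_orbit p (k - 1)) < snd (abmn_orbit p (k - 1))"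
    and after: "snd (abmn_orbit p k) \<le> fst (abmn_orbit p k)"
    using abmn_orbit_crossing[OF assms] .
  define q where "q = abmn_orbit p k"
  define r where "r = fst q / snd q"
  have q: "pos_pair q"
    using pos_pair_abmn_orbit[OF assms] by (simp add: q_def)
  have "q = abmn_next (abmn_orbit p (k - 1))"
    using abmn_orbit_Suc[OF assms, of "k - 1"] by (simp add: q_def)
  then have "r \<le> r_max"
    using abmn_next_ratio_le_r_max[OF pos_pair_abmn_orbit[OF assms] less_imp_le[OF before]]
    by (simp add: r_def)
  moreover have "1 \<le> r"
    using after q by (simp add: r_def q_def pos_pair_def)
  moreover have "(r, 1) = (1 / snd q) *\<^sub>R q"
    using q by (simp add: r_def prod_eq_iff pos_pair_def)
  then have "orbit_margin (r, 1) = orbit_margin p"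
    using orbit_margin_scaleR[OF _ q, of "1 / snd q"] orbit_margin_shift[OF assms, of k] q
    by (simp add: q_def pos_pair_def)
  ultimately show thesis
    using that by simp
qed

section \<open>Decay of orbits\<close>

lemma abmn_next_contracts:
  assumes "pos_pair p" "0 \<le> \<tau>" "\<tau> \<le> 1" "snd p \<le> \<tau> * fst p"
  shows "fst (abmn_next p) \<le> \<tau>^2 * fst p" "snd (abmn_next p) \<le> \<tau>^2 / 2 * fst (abmn_next p)"
proof -
  obtain a b where p: "p = (a, b)" and ab: "0 < a" "0 < b"
    using assms(1) by (cases p) (auto simp: pos_pair_def)
  define x where "x = fst (abmn_next p)"
  have x: "0 < x" "x < b^2 / a"
    using next_a_pos[OF ab] next_a_less[OF ab] by (simp_all add: x_def abmn_next_def p)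
  have "b^2 \<le> (\<tau> * a)^2"
    using assms(4) ab by (intro power_mono) (simp_all add: p)
  then have "b^2 / a \<le> \<tau>^2 * a"
    using ab by (simp add: power_mult_distrib field_simps power2_eq_square)
  then show x_le: "fst (abmn_next p) \<le> \<tau>^2 * fst p"
    using x by (simp add: x_def p)
  have "snd (abmn_next p) * (2 * a + b) = x^2"
    using abmn_rel_next[OF assms(1)] by (simp add: abmn_rel_def p x_def)
  also have "\<dots> \<le> (\<tau>^2 * a) * x"
    using x_le x by (simp add: power2_eq_square p x_def mult_right_mono)
  also have "\<dots> \<le> (\<tau>^2 / 2 * x) * (2 * a + b)"
    using ab x assms(2) by (simp add: algebra_simps mult_left_mono)
  finally show "snd (abmn_next p) \<le> \<tau>^2 / 2 * fst (abmn_next p)"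
    using ab by (simp add: x_def mult_le_cancel_right)
qed

lemma abmn_iterate_decay:
  assumes "pos_pair q" "snd q \<le> fst q"
  shows "fst ((abmn_next ^^ k) q) \<le> 4 * fst q * (1/4)^k"
    "snd ((abmn_next ^^ k) q) \<le> fst ((abmn_next ^^ k) q)"
proof -
  have first: "fst (abmn_next q) \<le> fst q" "snd (abmn_next q) \<le> 1/2 * fst (abmn_next q)"
    using abmn_next_contracts[OF assms(1), of 1] assms(2) by simp_all
  \<comment> \<open>after the first step the ratio is at most 1/2, so every further step divides by 4\<close>
  have later: "fst ((abmn_next ^^ Suc j) q) \<le> fst q * (1/4)^j \<and>
      snd ((abmn_next ^^ Suc j) q) \<le> 1/2 * fst ((abmn_next ^^ Suc j) q)" for j
  proof (induction j)
    case 0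
    then show ?case
      using first by simp
  next
    case (Suc j)
    let ?q = "(abmn_next ^^ Suc j) q"
    have q: "pos_pair ?q"
      using pos_pair_abmn_iterate[OF assms(1)] .
    have "fst (abmn_next ?q) \<le> (1/2)^2 * fst ?q"
      "snd (abmn_next ?q) \<le> (1/2)^2 / 2 * fst (abmn_next ?q)"
      using abmn_next_contracts[OF q, of "1/2"] Suc by simp_all
    moreover have "0 < fst (abmn_next ?q)"
      using pos_pair_abmn_next[OF q] by (simp add: pos_pair_def)
    ultimately show ?case
      using Suc by (simp add: power2_eq_square)
  qed
  have "0 < fst ((abmn_next ^^ k) q)"
    using pos_pair_abmn_iterate[OF assms(1)] by (simp add: pos_pair_def)
  then show "fst ((abmn_next ^^ k) q) \<le> 4 * fst q * (1/4)^k"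
    "snd ((abmn_next ^^ k) q) \<le> fst ((abmn_next ^^ k) q)"
    using later[of "k - 1"] assms by (cases k; simp)+
qed

lemma abmn_iterate_sums:
  assumes "pos_pair q" "snd q \<le> fst q"
  shows "summable (\<lambda>k. fst ((abmn_next ^^ k) q))" "summable (\<lambda>k. snd ((abmn_next ^^ k) q))"
    "(\<Sum>k. fst ((abmn_next ^^ k) q)) \<le> 16/3 * fst q" "(\<Sum>k. snd ((abmn_next ^^ k) q)) \<le> 16/3 * fst q"
proof -
  define g where "g k = 4 * fst q * (1/4::real)^k" for k
  have g: "g sums (16/3 * fst q)"
    unfolding g_def using sums_mult[OF geometric_sums[of "1/4::real"], of "4 * fst q"] by simp
  have bounds: "fst ((abmn_next ^^ k) q) \<le> g k" "snd ((abmn_next ^^ k) q) \<le> g k" for k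
    using abmn_iterate_decay[OF assms, of k] by (simp_all add: g_def)
  have nonneg: "0 \<le> fst ((abmn_next ^^ k) q)" "0 \<le> snd ((abmn_next ^^ k) q)" for k
    using pos_pair_abmn_iterate[OF assms(1), of k] by (simp_all add: pos_pair_def)
  show fst_summable: "summable (\<lambda>k. fst ((abmn_next ^^ k) q))"
    and snd_summable: "summable (\<lambda>k. snd ((abmn_next ^^ k) q))"
    by (rule summable_comparison_test'[OF sums_summable[OF g], of 0]; simp add: bounds nonneg)+
  show "(\<Sum>k. fst ((abmn_next ^^ k) q)) \<le> 16/3 * fst q"
    "(\<Sum>k. snd ((abmn_next ^^ k) q)) \<le> 16/3 * fst q"
    using suminf_le[OF bounds(1) fst_summable sums_summable[OF g]]
      suminf_le[OF bounds(2) snd_summable sums_summable[OF g]] sums_unique[OF g] by simp_all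
qed

lemma abmn_iterate_suminf_le:
  assumes "pos_pair q" "snd q \<le> fst q"
  shows "(\<Sum>k. fst ((abmn_next ^^ k) q)) \<le>
      (\<Sum>k<n. fst ((abmn_next ^^ k) q)) + 16/3 * fst ((abmn_next ^^ n) q)"
    "(\<Sum>k. snd ((abmn_next ^^ k) q)) \<le>
      (\<Sum>k<n. snd ((abmn_next ^^ k) q)) + 16/3 * fst ((abmn_next ^^ n) q)"
proof -
  define q' where "q' = (abmn_next ^^ n) q"
  have q': "pos_pair q'" "snd q' \<le> fst q'"
    using pos_pair_abmn_iterate[OF assms(1)] abmn_iterate_decay(2)[OF assms]
      by (simp_all add: q'_def)
  have tail: "(abmn_next ^^ (j + n)) q = (abmn_next ^^ j) q'" for j
    by (simp add: q'_def funpow_add)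
  show "(\<Sum>k. fst ((abmn_next ^^ k) q)) \<le>
      (\<Sum>k<n. fst ((abmn_next ^^ k) q)) + 16/3 * fst ((abmn_next ^^ n) q)"
    using suminf_split_initial_segment[OF abmn_iterate_sums(1)[OF assms], of n]
      abmn_iterate_sums(3)[OF q']
    by (simp add: tail q'_def)
  show "(\<Sum>k. snd ((abmn_next ^^ k) q)) \<le>
      (\<Sum>k<n. snd ((abmn_next ^^ k) q)) + 16/3 * fst ((abmn_next ^^ n) q)"
    using suminf_split_initial_segment[OF abmn_iterate_sums(2)[OF assms], of n]
      abmn_iterate_sums(4)[OF q']
    by (simp add: tail q'_def)
qed

lemma abmn_next_snd_le_fst:
  assumes "pos_pair p" "snd p ^ 2 / fst p \<le> 3 * (2 * fst p + snd p)"
  shows "snd (abmn_next p) \<le> fst (abmn_next p)"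
proof -
  obtain a b where p: "p = (a, b)" and ab: "0 < a" "0 < b"
    using assms(1) by (cases p) (auto simp: pos_pair_def)
  define c where "c = 2 * a + b"
  define s where "s = b^2 / a"
  define x where "x = fst (abmn_next p)"
  have c: "0 < c"
    using ab by (simp add: c_def)
  have "s \<le> 3 * c"
    using assms(2) by (simp add: p s_def c_def)
  then have "c * s \<le> c * (3 * c)"
    using c by (intro mult_left_mono) auto
  then have "x \<le> c"
    using next_a_compare(2)[OF ab, of c, folded c_def s_def] c
    by (simp add: x_def abmn_next_def p power2_eq_square)
  have "snd (abmn_next p) * c = x^2"
    using abmn_rel_next[OF assms(1)] by (simp add: abmn_rel_def p x_def c_def)
  also have "\<dots> \<le> x * c"
    using \<open>x \<le> c\<close> next_a_pos[OF ab] by (simp add: power2_eq_square x_def abmn_next_def p)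
  finally show ?thesis
    using c by (simp add: x_def)
qed

lemma abmn_next_one_r:
  assumes "r \<in> {1..r_max}"
  shows "pos_pair (abmn_next (1, r))" "snd (abmn_next (1, r)) \<le> fst (abmn_next (1, r))"
    "fst (abmn_next (1, r)) \<le> 25"
proof -
  have r: "1 \<le> r" "r < 5" "r^2 \<le> 3 * r + 6"
    using assms r_max_bounds le_r_max_iff[of r] by auto
  have p: "pos_pair (1, r)"
    using r by (simp add: pos_pair_def)
  show "pos_pair (abmn_next (1, r))"
    using pos_pair_abmn_next[OF p] .
  show "snd (abmn_next (1, r)) \<le> fst (abmn_next (1, r))"
    using abmn_next_snd_le_fst[OF p] r by simp
  have "fst (abmn_next (1, r)) < r^2"
    using next_a_less[of 1 r] r by (simp add: abmn_next_def)
  also have "r^2 \<le> 25"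
    using r by (simp add: power2_eq_square mult_mono')
  finally show "fst (abmn_next (1, r)) \<le> 25"
    by simp
qed

(* The sums of the a_i and of the b_i along the orbit through (r, 1), split at i = 0;
   by abmn_orbit_minus_Suc the backward half is the forward orbit of abmn_next (1, r). *)
definition normal_sum_a :: "real \<Rightarrow> real" where
  "normal_sum_a r =
     (\<Sum>k. fst ((abmn_next ^^ k) (r, 1))) + (\<Sum>k. snd ((abmn_next ^^ k) (abmn_next (1, r))))"

definition normal_sum_b :: "real \<Rightarrow> real" where
  "normal_sum_b r =
     (\<Sum>k. snd ((abmn_next ^^ k) (r, 1))) + (\<Sum>k. fst ((abmn_next ^^ k) (abmn_next (1, r))))"

lemma normal_orbit_summable:
  assumes "r \<in> {1..r_max}"
  shows "summable (\<lambda>k. fst ((abmn_next ^^ k) (r, 1)))"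
    "summable (\<lambda>k. snd ((abmn_next ^^ k) (r, 1)))"
    "summable (\<lambda>k. fst ((abmn_next ^^ k) (abmn_next (1, r))))"
    "summable (\<lambda>k. snd ((abmn_next ^^ k) (abmn_next (1, r))))"
proof -
  have "pos_pair (r, 1)" "snd (r, 1) \<le> fst (r, 1)"
    using assms by (simp_all add: pos_pair_def)
  then show "summable (\<lambda>k. fst ((abmn_next ^^ k) (r, 1)))"
    "summable (\<lambda>k. snd ((abmn_next ^^ k) (r, 1)))"
    by (simp_all add: abmn_iterate_sums)
  show "summable (\<lambda>k. fst ((abmn_next ^^ k) (abmn_next (1, r))))"
    "summable (\<lambda>k. snd ((abmn_next ^^ k) (abmn_next (1, r))))"
    using abmn_iterate_sums abmn_next_one_r[OF assms] by simp_all
qed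

lemma normal_orbit_has_sum:
  assumes "r \<in> {1..r_max}"
  shows "((\<lambda>i. fst (abmn_orbit (r, 1) i)) has_sum normal_sum_a r) UNIV"
    "((\<lambda>i. snd (abmn_orbit (r, 1) i)) has_sum normal_sum_b r) UNIV"
proof -
  have "pos_pair (abmn_orbit (r, 1) i)" for i
    using assms by (intro pos_pair_abmn_orbit) (simp add: pos_pair_def)
  then have nonneg: "0 \<le> fst (abmn_orbit (r, 1) i)" "0 \<le> snd (abmn_orbit (r, 1) i)" for i
    by (simp_all add: pos_pair_def less_imp_le)
  note sums = summable_sums[OF normal_orbit_summable(1)[OF assms]]
    summable_sums[OF normal_orbit_summable(2)[OF assms]]
    summable_sums[OF normal_orbit_summable(3)[OF assms]]
    summable_sums[OF normal_orbit_summable(4)[OF assms]]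
  show "((\<lambda>i. fst (abmn_orbit (r, 1) i)) has_sum normal_sum_a r) UNIV"
    unfolding normal_sum_a_def
      by (rule has_sum_int_split) (simp_all add: nonneg abmn_orbit_minus_Suc sums)
  show "((\<lambda>i. snd (abmn_orbit (r, 1) i)) has_sum normal_sum_b r) UNIV"
    unfolding normal_sum_b_def
      by (rule has_sum_int_split) (simp_all add: nonneg abmn_orbit_minus_Suc sums)
qed

lemma normal_sums_pos:
  assumes "r \<in> {1..r_max}"
  shows "0 < normal_sum_a r" "0 < normal_sum_b r"
proof -
  have "pos_pair (r, 1)"
    using assms by (simp add: pos_pair_def)
  then have "pos_pair ((abmn_next ^^ k) (r, 1))"
    "pos_pair ((abmn_next ^^ k) (abmn_next (1, r)))" for k
    using pos_pair_abmn_iterate abmn_next_one_r(1)[OF assms] by simp_all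
  then show "0 < normal_sum_a r" "0 < normal_sum_b r"
    unfolding normal_sum_a_def normal_sum_b_def
    by (intro add_pos_pos suminf_pos normal_orbit_summable[OF assms]; simp add: pos_pair_def)+
qed

lemma orbit_margin_normal:
  assumes "r \<in> {1..r_max}"
  shows "orbit_margin (r, 1) =
    (normal_sum_a r + 2 * normal_sum_b r) / (2 * normal_sum_a r + normal_sum_b r)"
  using normal_orbit_has_sum[OF assms] by (simp add: orbit_margin_def Let_def infsumI)

lemma orbit_margin_normal_pos:
  assumes "r \<in> {1..r_max}"
  shows "0 < orbit_margin (r, 1)"
  using normal_sums_pos[OF assms] by (simp add: orbit_margin_normal[OF assms])

lemma orbit_margin_normal_in_mina_margins:
  assumes "r \<in> {1..r_max}"
  shows "orbit_margin (r, 1) \<in> mina_margins"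
proof -
  have p: "pos_pair (r, 1)"
    using assms by (simp add: pos_pair_def)
  have "summable (\<lambda>k. fst ((abmn_next ^^ k) (abmn_next (prod.swap (r, 1)))))"
    "summable (\<lambda>k. snd ((abmn_next ^^ k) (abmn_next (prod.swap (r, 1)))))"
    using normal_orbit_summable(3,4)[OF assms] by simp_all
  then obtain m n mL mR nL nR where
    sol: "positive_ABMN_solution (\<lambda>i. fst (abmn_orbit (r, 1) i))
      (\<lambda>i. snd (abmn_orbit (r, 1) i)) m n"
    and bd: "has_boundary_data m n mL mR nL nR"
    using abmn_orbit_solution[OF p normal_orbit_summable(1,2)[OF assms]] by blast
  have "mina_margin mL mR nL nR \<in> mina_margins"
    using sol bd unfolding mina_margins_def by blast
  then show ?thesis
    using mina_margin_solution[OF sol bd] by simp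
qed

lemma continuous_on_suminf:
  fixes f :: "nat \<Rightarrow> 'a::topological_space \<Rightarrow> real"
  assumes "\<And>k. continuous_on S (f k)" "\<And>k x. x \<in> S \<Longrightarrow> \<bar>f k x\<bar> \<le> M k" "summable M"
  shows "continuous_on S (\<lambda>x. \<Sum>k. f k x)"
proof (rule uniform_limit_theorem)
  show "uniform_limit S (\<lambda>n x. \<Sum>k<n. f k x) (\<lambda>x. \<Sum>k. f k x) sequentially"
    using assms(2,3) by (intro Weierstrass_m_test) auto
  show "\<forall>\<^sub>F n in sequentially. continuous_on S (\<lambda>x. \<Sum>k<n. f k x)"
    using assms(1) by (intro always_eventually allI continuous_on_sum) auto
qed simp

lemma continuous_on_abmn_next: "continuous_on {p. pos_pair p} abmn_next"
proof -
  have "continuous_on {p. pos_pair p} (\<lambda>p. next_a (fst p) (snd p))"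
    unfolding next_a_def by (intro continuous_intros) (auto simp: pos_pair_def)
  then show ?thesis
    unfolding abmn_next_def by (intro continuous_intros) (auto simp: pos_pair_def)
qed

lemma continuous_on_abmn_iterate:
  assumes "continuous_on S g" "\<And>x. x \<in> S \<Longrightarrow> pos_pair (g x)"
  shows "continuous_on S (\<lambda>x. (abmn_next ^^ k) (g x))"
proof (induction k)
  case (Suc k)
  have "continuous_on S (\<lambda>x. abmn_next ((abmn_next ^^ k) (g x)))"
    by (rule continuous_on_compose2[OF continuous_on_abmn_next Suc])
      (use assms(2) pos_pair_abmn_iterate in blast)
  then show ?case
    by simp
qed (simp add: assms(1))

lemma abmn_iterate_abs_le:
  assumes "pos_pair q" "snd q \<le> fst q" "fst q \<le> 25"
  shows "\<bar>fst ((abmn_next ^^ k) q)\<bar> \<le> 100 * (1/4)^k" "\<bar>snd ((abmn_next ^^ k) q)\<bar> \<le> 100 * (1/4)^k"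
proof -
  have "4 * fst q * (1/4::real)^k \<le> 100 * (1/4)^k"
    using assms(3) by (simp add: mult_right_mono)
  then have "fst ((abmn_next ^^ k) q) \<le> 100 * (1/4)^k"
    using abmn_iterate_decay(1)[OF assms(1,2), of k] by linarith
  then show "\<bar>fst ((abmn_next ^^ k) q)\<bar> \<le> 100 * (1/4)^k"
    "\<bar>snd ((abmn_next ^^ k) q)\<bar> \<le> 100 * (1/4)^k"
    using abmn_iterate_decay(2)[OF assms(1,2), of k] pos_pair_abmn_iterate[OF assms(1), of k]
    by (simp_all add: pos_pair_def)
qed

lemma continuous_on_normal_sums:
  "continuous_on {1..r_max} normal_sum_a" "continuous_on {1..r_max} normal_sum_b"
proof -
  have geometric: "summable (\<lambda>k. 100 * (1/4::real)^k)"
    by (intro summable_mult summable_geometric) simp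
  have forward: "continuous_on {1..r_max} (\<lambda>r. (abmn_next ^^ k) (r, 1))" for k
    by (rule continuous_on_abmn_iterate) (auto intro!: continuous_intros simp: pos_pair_def)
  have "continuous_on {1..r_max} (\<lambda>r. abmn_next (1, r))"
    by (rule continuous_on_compose2[OF continuous_on_abmn_next])
      (auto intro!: continuous_intros simp: pos_pair_def)
  then have backward: "continuous_on {1..r_max} (\<lambda>r. (abmn_next ^^ k) (abmn_next (1, r)))" for k
    by (rule continuous_on_abmn_iterate) (rule abmn_next_one_r(1))
  have forward_bound: "\<bar>fst ((abmn_next ^^ k) (r, 1))\<bar> \<le> 100 * (1/4)^k"
    "\<bar>snd ((abmn_next ^^ k) (r, 1))\<bar> \<le> 100 * (1/4)^k" if "r \<in> {1..r_max}" for r k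
    using abmn_iterate_abs_le[of "(r, 1)" k] that r_max_bounds by (simp_all add: pos_pair_def)
  have backward_bound: "\<bar>fst ((abmn_next ^^ k) (abmn_next (1, r)))\<bar> \<le> 100 * (1/4)^k"
    "\<bar>snd ((abmn_next ^^ k) (abmn_next (1, r)))\<bar> \<le> 100 * (1/4)^k" if "r \<in> {1..r_max}" for r k
    using abmn_iterate_abs_le[OF abmn_next_one_r[OF that]] by simp_all
  show "continuous_on {1..r_max} normal_sum_a" "continuous_on {1..r_max} normal_sum_b"
    unfolding normal_sum_a_def normal_sum_b_def
    by (intro continuous_on_add continuous_on_suminf[OF _ _ geometric] continuous_on_fst
          continuous_on_snd forward backward forward_bound backward_bound; assumption)+
qed

lemma continuous_on_orbit_margin_normal: "continuous_on {1..r_max} (\<lambda>r. orbit_margin (r, 1))"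
proof -
  have "2 * normal_sum_a r + normal_sum_b r \<noteq> 0" if "r \<in> {1..r_max}" for r
    using normal_sums_pos[OF that] by simp
  then have "continuous_on {1..r_max}
      (\<lambda>r. (normal_sum_a r + 2 * normal_sum_b r) / (2 * normal_sum_a r + normal_sum_b r))"
    using continuous_on_normal_sums by (intro continuous_intros) auto
  then show ?thesis
    by (rule continuous_on_cong[THEN iffD1, OF refl, rotated]) (simp add: orbit_margin_normal)
qed

lemma mina_margins_eq: "mina_margins = (\<lambda>r. orbit_margin (r, 1)) ` {1..r_max}"
proof
  show "mina_margins \<subseteq> (\<lambda>r. orbit_margin (r, 1)) ` {1..r_max}"
  proof
    fix x
    assume "x \<in> mina_margins"
    then obtain a b m n mL mR nL nR where x: "x = mina_margin mL mR nL nR"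
      and sol: "positive_ABMN_solution a b m n" and bd: "has_boundary_data m n mL mR nL nR"
      unfolding mina_margins_def by blast
    have "pos_pair (a 0, b 0)"
      using sol by (simp add: positive_ABMN_solution_iff)
    then obtain r where "r \<in> {1..r_max}" "orbit_margin (a 0, b 0) = orbit_margin (r, 1)"
      using orbit_margin_normal_form by blast
    then show "x \<in> (\<lambda>r. orbit_margin (r, 1)) ` {1..r_max}"
      using mina_margin_solution[OF sol bd] x by auto
  qed
  show "(\<lambda>r. orbit_margin (r, 1)) ` {1..r_max} \<subseteq> mina_margins"
    using orbit_margin_normal_in_mina_margins by blast
qed

lemma mina_margins_pos: "x \<in> mina_margins \<Longrightarrow> 0 < x"
  using orbit_margin_normal_pos by (auto simp: mina_margins_eq)

lemma mina_margins_inverse: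
  assumes "x \<in> mina_margins"
  shows "1 / x \<in> mina_margins"
proof -
  obtain r where r: "r \<in> {1..r_max}" and x: "x = orbit_margin (r, 1)"
    using assms by (auto simp: mina_margins_eq)
  have p: "pos_pair (1, r)"
    using r by (simp add: pos_pair_def)
  have "1 / x = orbit_margin (1, r)"
    using orbit_margin_swap[OF p] by (simp add: x)
  moreover obtain r' where "r' \<in> {1..r_max}" "orbit_margin (1, r) = orbit_margin (r', 1)"
    using orbit_margin_normal_form[OF p] by blast
  ultimately show ?thesis
    by (simp add: mina_margins_eq)
qed

lemma positive_solution_exists_iff:
  "(\<exists>a b m n. positive_ABMN_solution a b m n \<and> has_boundary_data m n mL mR nL nR) \<longleftrightarrow>
     mL < mR \<and> nR < nL \<and> mina_margin mL mR nL nR \<in> mina_margins"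
proof
  assume "\<exists>a b m n. positive_ABMN_solution a b m n \<and> has_boundary_data m n mL mR nL nR"
  then show "mL < mR \<and> nR < nL \<and> mina_margin mL mR nL nR \<in> mina_margins"
    using solution_boundary_gaps unfolding mina_margins_def by blast
next
  assume "mL < mR \<and> nR < nL \<and> mina_margin mL mR nL nR \<in> mina_margins"
  then show "\<exists>a b m n. positive_ABMN_solution a b m n \<and> has_boundary_data m n mL mR nL nR"
    unfolding mina_margins_def using positive_solution_exists_of_margin by auto
qed

lemma interval_closed_under_inverse:
  fixes c d :: real
  assumes "0 < c" "c \<le> d" "\<And>x. x \<in> {c..d} \<Longrightarrow> 1 / x \<in> {c..d}"
  shows "d = 1 / c" "c \<le> 1"
proof -
  have "1 / c \<le> d" "c \<le> 1 / d"
    using assms(3)[of c] assms(3)[of d] assms(2) by auto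
  then show "d = 1 / c"
    using assms(1,2) by (simp add: field_simps)
  moreover have "c * c \<le> c * d"
    using assms(1,2) by (simp add: mult_left_mono)
  ultimately have "c^2 \<le> 1"
    using assms(1) by (simp add: power2_eq_square)
  then show "c \<le> 1"
    using abs_square_le_1[of c] assms(1) by simp
qed

section \<open>A rigorous numerical bound\<close>

(* Both sides of 2 x^2 + (2a + b) x = (2a + b) b^2/a are monotone in a and b, so it suffices to
   compare them at the corners of the box (with denominators cleared). *)
lemma next_a_enclosure:
  fixes a_lo a_hi b_lo b_hi L U :: real
  assumes "a \<in> {a_lo..a_hi}" "b \<in> {b_lo..b_hi}" "0 < a_lo" "0 < b_lo" "0 \<le> L" "0 < U"
    and "a_hi * (2 * L^2 + (2 * a_hi + b_hi) * L) \<le> (2 * a_lo + b_lo) * b_lo^2"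
    and "(2 * a_hi + b_hi) * b_hi^2 \<le> a_lo * (2 * U^2 + (2 * a_lo + b_lo) * U)"
  shows "next_a a b \<in> {L..U}"
proof -
  have ab: "0 < a" "0 < b"
    using assms(1-4) by auto
  define c where "c = 2 * a + b"
  define s where "s = b^2 / a"
  have c: "0 < 2 * a_lo + b_lo" "2 * a_lo + b_lo \<le> c" "c \<le> 2 * a_hi + b_hi"
    using assms(1-4) by (simp_all add: c_def)
  have "b_lo^2 \<le> b^2" "b^2 \<le> b_hi^2"
    using assms(2,4) by (simp_all add: power_mono)
  then have s: "b_lo^2 / a_hi \<le> s" "s \<le> b_hi^2 / a_lo" "0 \<le> s"
    using assms(1,3) ab by (simp_all add: s_def frac_le)
  have "2 * L^2 + c * L \<le> 2 * L^2 + (2 * a_hi + b_hi) * L"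
    using c assms(5) by (simp add: mult_right_mono)
  also have "\<dots> \<le> (2 * a_lo + b_lo) * (b_lo^2 / a_hi)"
    using assms(1,3,7) by (simp add: field_simps)
  also have "\<dots> \<le> c * s"
    using c s assms(1,3) by (intro mult_mono) auto
  finally have "L \<le> next_a a b"
    using next_a_compare(1)[OF ab assms(5)] by (simp add: c_def s_def)
  have "c * s \<le> (2 * a_hi + b_hi) * (b_hi^2 / a_lo)"
    using c s by (intro mult_mono) auto
  also have "\<dots> \<le> 2 * U^2 + (2 * a_lo + b_lo) * U"
    using assms(3,8) by (simp add: field_simps)
  also have "\<dots> \<le> 2 * U^2 + c * U"
    using c assms(6) by (simp add: mult_right_mono)
  finally have "next_a a b \<le> U"
    using next_a_compare(2)[OF ab, of U] assms(6) by (simp add: c_def s_def)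
  with \<open>L \<le> next_a a b\<close> show ?thesis
    by simp
qed

(* The second component is bounded through x^2/(2a + b) (by abmn_rel) rather than through its
   defining formula (b^2/a - x)/2, which suffers from cancellation. *)
lemma abmn_next_enclosure:
  fixes a_lo a_hi b_lo b_hi L U V_lo V_hi :: real
  assumes "p \<in> {a_lo..a_hi} \<times> {b_lo..b_hi}" "0 < a_lo" "0 < b_lo" "0 \<le> L" "0 < U"
    and "a_hi * (2 * L^2 + (2 * a_hi + b_hi) * L) \<le> (2 * a_lo + b_lo) * b_lo^2"
    and "(2 * a_hi + b_hi) * b_hi^2 \<le> a_lo * (2 * U^2 + (2 * a_lo + b_lo) * U)"
    and "(2 * a_hi + b_hi) * V_lo \<le> L^2" "U^2 \<le> (2 * a_lo + b_lo) * V_hi"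
  shows "abmn_next p \<in> {L..U} \<times> {V_lo..V_hi}"
proof -
  obtain a b where p: "p = (a, b)" and a: "a \<in> {a_lo..a_hi}" and b: "b \<in> {b_lo..b_hi}"
    using assms(1) by auto
  define x where "x = fst (abmn_next p)"
  have x: "L \<le> x" "x \<le> U"
    using next_a_enclosure[OF a b assms(2-7)] by (simp_all add: x_def abmn_next_def p)
  have c: "0 < 2 * a_lo + b_lo" "2 * a_lo + b_lo \<le> 2 * a + b" "2 * a + b \<le> 2 * a_hi + b_hi"
    using a b assms(2,3) by auto
  have "pos_pair p"
    using a b assms(2,3) by (simp add: p pos_pair_def)
  then have snd_eq: "snd (abmn_next p) = x^2 / (2 * a + b)"
    using abmn_rel_next[of p] c by (simp add: abmn_rel_def p x_def field_simps)
  have "V_lo \<le> L^2 / (2 * a_hi + b_hi)"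
    using assms(8) c by (simp add: field_simps)
  also have "\<dots> \<le> x^2 / (2 * a + b)"
    using x assms(4) c by (intro frac_le power_mono) auto
  finally have "V_lo \<le> snd (abmn_next p)"
    by (simp add: snd_eq)
  have "x^2 / (2 * a + b) \<le> U^2 / (2 * a_lo + b_lo)"
    using x assms(4) c by (intro frac_le power_mono) auto
  also have "\<dots> \<le> V_hi"
    using assms(9) c by (simp add: field_simps)
  finally have "snd (abmn_next p) \<le> V_hi"
    by (simp add: snd_eq)
  with x \<open>V_lo \<le> snd (abmn_next p)\<close> show ?thesis
    by (simp add: mem_Times_iff x_def)
qed

lemma r_2906_in_range: "(2.906::real) \<in> {1..r_max}"
  using le_r_max_iff[of "2.906"] by (simp add: power2_eq_square)

lemma abmn_iterate_enclosures_2906: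
  shows "(abmn_next ^^ 1) (2.906, 1) \<in>
       {0.3149858 .. 0.3149859} \<times> {0.01456489 .. 0.01456491}" (is ?x1)
    and "(abmn_next ^^ 2) (2.906, 1) \<in>
       {6.72076 / 10^4 .. 6.720786 / 10^4} \<times> {7.007919 / 10^7 .. 7.007977 / 10^7}" (is ?x2)
    and "(abmn_next ^^ 3) (2.906, 1) \<in>
       {7.307282 / 10^10 .. 7.307489 / 10^10} \<times> {3.970409 / 10^16 .. 3.97065 / 10^16}" (is ?x3)
    and "(abmn_next ^^ 0) (abmn_next (1, 2.906)) \<in>
       {3.487254 .. 3.487255} \<times> {2.478789 .. 2.478791}" (is ?y0)
    and "(abmn_next ^^ 1) (abmn_next (1, 2.906)) \<in>
       {1.366749 .. 1.366753} \<times> {0.1976032 .. 0.1976045}" (is ?y1)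
    and "(abmn_next ^^ 2) (abmn_next (1, 2.906)) \<in>
       {0.02803288 .. 0.02803351} \<times> {2.681039 / 10^4 .. 2.681169 / 10^4}" (is ?y2)
    and "(abmn_next ^^ 3) (abmn_next (1, 2.906)) \<in>
       {2.563772 / 10^6 .. 2.564195 / 10^6} \<times> {1.166754 / 10^10 .. 1.167166 / 10^10}" (is ?y3)
    and "(abmn_next ^^ 4) (abmn_next (1, 2.906)) \<in>
       {5.30806 / 10^15 .. 5.31444 / 10^15} \<times> {5.493899 / 10^24 .. 5.508023 / 10^24}" (is ?y4)
proof -
  have iterate: "(abmn_next ^^ 1) q = abmn_next ((abmn_next ^^ 0) q)"
    "(abmn_next ^^ 2) q = abmn_next ((abmn_next ^^ 1) q)"
    "(abmn_next ^^ 3) q = abmn_next ((abmn_next ^^ 2) q)"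
    "(abmn_next ^^ 4) q = abmn_next ((abmn_next ^^ 3) q)" for q
    by (simp_all add: numeral_eq_Suc)
  show x1: ?x1
    unfolding iterate(1)
    by (rule abmn_next_enclosure[where a_lo = "2.906" and a_hi = "2.906" and b_lo = 1 and b_hi = 1])
      (simp_all add: power2_eq_square)
  show x2: ?x2
    unfolding iterate(2) by (rule abmn_next_enclosure[OF x1]) (simp_all add: power2_eq_square)
  show ?x3
    unfolding iterate(3) by (rule abmn_next_enclosure[OF x2]) (simp_all add: power2_eq_square)
  show y0: ?y0
    unfolding funpow_0
    by (rule abmn_next_enclosure[where a_lo = 1 and a_hi = 1 and b_lo = "2.906" and b_hi = "2.906"])
      (simp_all add: power2_eq_square)
  show y1: ?y1
    unfolding iterate(1) by (rule abmn_next_enclosure[OF y0]) (simp_all add: power2_eq_square)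
  show y2: ?y2
    unfolding iterate(2) by (rule abmn_next_enclosure[OF y1]) (simp_all add: power2_eq_square)
  show y3: ?y3
    unfolding iterate(3) by (rule abmn_next_enclosure[OF y2]) (simp_all add: power2_eq_square)
  show ?y4
    unfolding iterate(4) by (rule abmn_next_enclosure[OF y3]) (simp_all add: power2_eq_square)
qed

lemma normal_sums_2906: "5.89831 \<le> normal_sum_a 2.906" "normal_sum_b 2.906 \<le> 5.89661"
proof -
  define y0 where "y0 = abmn_next (1, 2.906)"
  have forward: "pos_pair (2.906::real, 1::real)"
    "snd (2.906::real, 1::real) \<le> fst (2.906::real, 1::real)"
    by (simp_all add: pos_pair_def)
  have backward: "pos_pair y0" "snd y0 \<le> fst y0"
    using abmn_next_one_r(1,2)[OF r_2906_in_range] by (simp_all add: y0_def)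
  have sum3: "(\<Sum>k<3. f k) = f 0 + f 1 + f 2" and sum4: "(\<Sum>k<4. f k) = f 0 + f 1 + f 2 + f 3"
    for f :: "nat \<Rightarrow> real"
    by (simp_all add: numeral_eq_Suc)
  have nonneg: "0 \<le> fst ((abmn_next ^^ k) (2.906, 1))" "0 \<le> snd ((abmn_next ^^ k) y0)" for k
    using pos_pair_abmn_iterate[OF forward(1), of k] pos_pair_abmn_iterate[OF backward(1), of k]
    by (simp_all add: pos_pair_def)
  have "(\<Sum>k<3. fst ((abmn_next ^^ k) (2.906, 1))) + (\<Sum>k<3. snd ((abmn_next ^^ k) y0))
      \<le> normal_sum_a 2.906"
    unfolding normal_sum_a_def y0_def[symmetric]
    by (intro add_mono sum_le_suminf)
      (use normal_orbit_summable[OF r_2906_in_range] nonneg in \<open>simp_all add: y0_def\<close>)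
  then show "5.89831 \<le> normal_sum_a 2.906"
    using abmn_iterate_enclosures_2906 unfolding sum3 y0_def
      by (simp add: mem_Times_iff del: funpow.simps)
  have "normal_sum_b 2.906 \<le>
      (\<Sum>k<3. snd ((abmn_next ^^ k) (2.906, 1))) + 16/3 * fst ((abmn_next ^^ 3) (2.906, 1))
      + ((\<Sum>k<4. fst ((abmn_next ^^ k) y0)) + 16/3 * fst ((abmn_next ^^ 4) y0))"
    unfolding normal_sum_b_def y0_def[symmetric]
    using abmn_iterate_suminf_le(2)[OF forward, of 3] abmn_iterate_suminf_le(1)[OF backward, of 4]
    by simp
  then show "normal_sum_b 2.906 \<le> 5.89661"
    using abmn_iterate_enclosures_2906 unfolding sum3 sum4 y0_def
      by (simp add: mem_Times_iff del: funpow.simps)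
qed

lemma orbit_margin_2906: "orbit_margin (2.906, 1) \<le> 0.999904"
proof -
  note r = r_2906_in_range
  have "normal_sum_a 2.906 + 2 * normal_sum_b 2.906 \<le>
      0.999904 * (2 * normal_sum_a 2.906 + normal_sum_b 2.906)"
    using normal_sums_2906 by simp
  then show ?thesis
    unfolding orbit_margin_normal[OF r] using normal_sums_pos[OF r] by (simp add: divide_le_eq)
qed

theorem mainTheorem2:
  shows "\<exists>lam::real. 0 < lam \<and> lam \<le> 1 \<and>
           mina_margins = {lam .. 1 / lam} \<and>
           (\<forall>mL mR nL nR.
              (\<exists>a b m n. positive_ABMN_solution a b m n \<and> has_boundary_data m n mL mR nL nR)
              \<longleftrightarrow> (mL < mR \<and> nR < nL \<and> mina_margin mL mR nL nR \<in> {lam .. 1 / lam})) \<and>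
           lam \<le> 0.999904"
proof -
  have "1 \<le> r_max"
    using r_max_bounds(1) by simp
  then obtain c d where image: "(\<lambda>r. orbit_margin (r, 1)) ` {1..r_max} = {c..d}" and "c \<le> d"
    using continuous_image_closed_interval[OF _ continuous_on_orbit_margin_normal] by blast
  then have margins: "mina_margins = {c..d}"
    by (simp add: mina_margins_eq)
  have "0 < c"
    using mina_margins_pos \<open>c \<le> d\<close> by (simp add: margins)
  then have "d = 1 / c" "c \<le> 1"
    using interval_closed_under_inverse[of c d] \<open>c \<le> d\<close> mina_margins_inverse
      by (simp_all add: margins)
  have "orbit_margin (2.906, 1) \<in> {c..d}"
    unfolding image[symmetric] by (rule imageI[OF r_2906_in_range])
  then have "c \<le> 0.999904"
    using orbit_margin_2906 by simp
  then show ?thesis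
    using \<open>0 < c\<close> \<open>c \<le> 1\<close> \<open>d = 1 / c\<close> margins positive_solution_exists_iff
    by (intro exI[of _ c]) simp
qed

end
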